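(* Let $0<\delta<1$, let $X\subset\mathbb{R}^d$ be finite and $\delta$-separated, and let $K\ge1$. Then $X$ can be partitioned as $X=Y\sqcup Z$, with $Z=Z_1\sqcup\cdots\sqcup Z_N$, such that: (i) $\displaystyle\sup_{r\ge\delta,\ x\in\mathbb{R}^d}\frac{\#(B(x,r)\cap Y)}{r/\delta}\le K$; (ii) each $Z_i$ is contained in a ball of radius $r_i\gtrsim\delta K^{1/d}$, and each $Z_i$ has a subset $Z_i'$ with $\#Z_i'\sim r_i/\delta$ and $$\sup_{r\ge\delta,\ x\in\mathbb{R}^d}\frac{\#(B(x,r)\cap Z_i')}{r/\delta}\lessapprox 1.$$
   Context: $A\lesssim B$ means $A\le CB$ for a constant $C$ (allowed to depend on the dimension $d$); $A\sim B$ means $A\lesssim B$ and $B\lesssim A$; $A\lessapprox B$ means $A\lesssim|\log\delta|^{C'}B$ for an absolute constant $C'$. *)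

theory Defs
  imports Complex_Main
begin

text \<open>Points of R^d are represented as functions nat => real vanishing at all
  coordinates i >= d (explicit carrier, so that the dimension d can be quantified
  inside the statement).\<close>

definition Rd :: "nat \<Rightarrow> (nat \<Rightarrow> real) set" where
  "Rd d = {x. \<forall>i\<ge>d. x i = 0}"

definition edist :: "nat \<Rightarrow> (nat \<Rightarrow> real) \<Rightarrow> (nat \<Rightarrow> real) \<Rightarrow> real" where
  "edist d x y = sqrt (\<Sum>i<d. (x i - y i)^2)"

definition eball :: "nat \<Rightarrow> (nat \<Rightarrow> real) \<Rightarrow> real \<Rightarrow> (nat \<Rightarrow> real) set" where
  "eball d x r = {y \<in> Rd d. edist d x y < r}"

definition separated :: "nat \<Rightarrow> real \<Rightarrow> (nat \<Rightarrow> real) set \<Rightarrow> bool" where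
  "separated d \<delta> X \<longleftrightarrow> (\<forall>x\<in>X. \<forall>y\<in>X. x \<noteq> y \<longrightarrow> edist d x y \<ge> \<delta>)"

definition frostman_le :: "nat \<Rightarrow> real \<Rightarrow> (nat \<Rightarrow> real) set \<Rightarrow> real \<Rightarrow> bool" where
  "frostman_le d \<delta> A M \<longleftrightarrow>
     (\<forall>x\<in>Rd d. \<forall>r\<ge>\<delta>. real (card (eball d x r \<inter> A)) \<le> M * (r / \<delta>))"

end

theory Submission
  imports Defs "HOL-Library.FuncSet"
begin

text \<open>
  Cover \<open>\<real>^d\<close> by the dyadic cubes of side \<open>2^i \<delta>/d\<close>, \<open>i \<ge> 0\<close>, and call a cube of level \<open>i\<close> heavy if it
  contains more than \<open>B 2^i\<close> points of \<open>X\<close>, where \<open>B = K/(2^(d+2) d)\<close>. If no cube is heavy, a ball of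
  radius \<open>r \<ge> \<delta>\<close> meets at most \<open>2^d\<close> cubes of a level with side comparable to \<open>r\<close>, so it contains
  \<open>\<le> K r/\<delta>\<close> points. Otherwise let \<open>Q\<close> be a heavy cube of least level \<open>j\<close>. Being \<open>\<delta>\<close>-separated, \<open>X\<close> has
  at most \<open>2^(jd)\<close> points in \<open>Q\<close>, so \<open>K^(1/d) \<lesssim> 2^j\<close>, and \<open>Q\<close> lies in a ball of radius \<open>2^j \<delta>\<close>.
  List the points of \<open>X\<close> in \<open>Q\<close> along the Z-order curve, under which every dyadic subcube of \<open>Q\<close> is an
  interval, and keep every \<open>\<lceil>B\<rceil>\<close>-th one: by minimality of \<open>j\<close> this leaves \<open>\<lesssim> 2^i\<close> points in every
  subcube of level \<open>i\<close>, hence a Frostman set \<open>Z'\<close> of size \<open>\<sim> 2^j\<close> with constant depending only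
  on \<open>d\<close>. Remove \<open>Q\<close> and repeat. When \<open>K\<close> is below a dimensional constant, single points serve as the
  parts. No logarithmic loss occurs, so \<open>C' = 0\<close>.
\<close>

section \<open>Digit expansions and Morton codes\<close>

lemma sum_digits_less:
  fixes f :: "nat \<Rightarrow> nat"
  assumes "\<forall>k<m. f k < b"
  shows "(\<Sum>k<m. f k * b^k) < b^m"
  using assms
proof (induction m)
  case (Suc m)
  have "b > 0"
    using Suc.prems by (metis lessI not_less_zero gr_zeroI)
  have "f m * b^m \<le> (b - 1) * b^m"
    using Suc.prems by (intro mult_right_mono) auto
  moreover have "(\<Sum>k<m. f k * b^k) < b^m"
    using Suc by simp
  ultimately have "(\<Sum>k<m. f k * b^k) + f m * b^m < b^m + (b - 1) * b^m"
    by linarith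
  then have "(\<Sum>k<Suc m. f k * b^k) < b^m + (b - 1) * b^m"
    by simp
  also have "\<dots> = b^Suc m"
    using \<open>b > 0\<close> by (cases b) simp_all
  finally show ?case .
qed simp

lemma sum_digits_eqD:
  fixes f g :: "nat \<Rightarrow> nat"
  assumes "\<forall>k<m. f k < b" "\<forall>k<m. g k < b" "(\<Sum>k<m. f k * b^k) = (\<Sum>k<m. g k * b^k)"
  shows "\<forall>k<m. f k = g k"
  using assms
proof (induction m)
  case (Suc m)
  have f: "\<forall>k<m. f k < b" and g: "\<forall>k<m. g k < b"
    using Suc.prems(1,2) by simp_all
  have "b > 0"
    using Suc.prems(1) by (metis lessI not_less_zero gr_zeroI)
  note low = sum_digits_less[OF f] sum_digits_less[OF g]
  have sum: "(\<Sum>k<m. f k * b^k) + f m * b^m = (\<Sum>k<m. g k * b^k) + g m * b^m"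
    using Suc.prems(3) by simp
  have "(\<Sum>k<m. f k * b^k) = (\<Sum>k<m. g k * b^k)"
    using arg_cong[OF sum, of "\<lambda>x. x mod b^m"] low by simp
  then have "\<forall>k<m. f k = g k"
    by (rule Suc.IH[OF f g])
  moreover have "f m = g m"
    using arg_cong[OF sum, of "\<lambda>x. x div b^m"] low \<open>b > 0\<close> by simp
  ultimately show ?case
    by (simp add: less_Suc_eq)
qed simp

text \<open>The Morton (Z-order) code of \<open>u 0, \<dots>, u (d - 1)\<close>: interleaving their bits makes the dyadic
  subcubes of \<open>{0..<2^n}^d\<close> intervals of codes.\<close>

fun morton :: "nat \<Rightarrow> nat \<Rightarrow> (nat \<Rightarrow> nat) \<Rightarrow> nat" where
  "morton d 0 u = 0"
| "morton d (Suc n) u = (\<Sum>k<d. u k mod 2 * 2^k) + 2^d * morton d n (\<lambda>k. u k div 2)"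

lemma morton_digit_less: "(\<Sum>k<d. u k mod 2 * 2^k) < (2::nat)^d"
  by (rule sum_digits_less) simp

lemma morton_div_pow:
  "i \<le> n \<Longrightarrow> morton d n u div (2^d)^i = morton d (n - i) (\<lambda>k. u k div 2^i)"
proof (induction n arbitrary: i u)
  case (Suc n)
  show ?case
  proof (cases i)
    case (Suc i')
    have "morton d (Suc n) u div (2^d)^i = morton d (Suc n) u div 2^d div (2^d)^i'"
      by (simp add: Suc div_mult2_eq)
    also have "\<dots> = morton d n (\<lambda>k. u k div 2) div (2^d)^i'"
      using morton_digit_less[of u d] by simp
    also have "\<dots> = morton d (Suc n - i) (\<lambda>k. u k div 2^i)"
      using Suc.prems by (simp add: Suc.IH Suc div_mult2_eq)
    finally show ?thesis .
  qed simp
qed simp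

lemma morton_cong: "\<forall>k<d. u k = w k \<Longrightarrow> morton d n u = morton d n w"
  by (induction n arbitrary: u w) auto

lemma morton_eqD:
  assumes "\<forall>k<d. u k < 2^n" "\<forall>k<d. w k < 2^n" "morton d n u = morton d n w"
  shows "\<forall>k<d. u k = w k"
  using assms
proof (induction n arbitrary: u w)
  case (Suc n)
  have sum: "(\<Sum>k<d. u k mod 2 * 2^k) + 2^d * morton d n (\<lambda>k. u k div 2)
      = (\<Sum>k<d. w k mod 2 * 2^k) + 2^d * morton d n (\<lambda>k. w k div 2)"
    using Suc.prems(3) by simp
  have "(\<Sum>k<d. u k mod 2 * 2^k) = (\<Sum>k<d. w k mod 2 * 2^k)"
    using arg_cong[OF sum, of "\<lambda>x. x mod 2^d"] morton_digit_less[of _ d] by simp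
  then have "\<forall>k<d. u k mod 2 = w k mod 2"
    by (intro sum_digits_eqD[where b = 2]) auto
  moreover have "morton d n (\<lambda>k. u k div 2) = morton d n (\<lambda>k. w k div 2)"
    using arg_cong[OF sum, of "\<lambda>x. x div 2^d"] morton_digit_less[of _ d] by simp
  then have "\<forall>k<d. u k div 2 = w k div 2"
    using Suc by (intro Suc.IH) (auto simp: less_mult_imp_div_less)
  ultimately show ?case
    by (metis div_mult_mod_eq)
qed simp

lemma morton_div_eq_iff:
  assumes "\<forall>k<d. u k < 2^n" "\<forall>k<d. w k < 2^n" "i \<le> n"
  shows "morton d n u div (2^d)^i = morton d n w div (2^d)^i \<longleftrightarrow> (\<forall>k<d. u k div 2^i = w k div 2^i)"
proof -
  have bound: "\<forall>k<d. v k div 2^i < 2^(n - i)" if "\<forall>k<d. v k < 2^n" for v :: "nat \<Rightarrow> nat"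
  proof (intro allI impI)
    fix k
    assume "k < d"
    moreover have "(2::nat)^n = 2^(n - i) * 2^i"
      using assms(3) by (metis le_add_diff_inverse2 power_add)
    ultimately have "v k < 2^(n - i) * 2^i"
      using that by simp
    then show "v k div 2^i < 2^(n - i)"
      by (rule less_mult_imp_div_less)
  qed
  have "morton d n u div (2^d)^i = morton d n w div (2^d)^i
      \<longleftrightarrow> morton d (n - i) (\<lambda>k. u k div 2^i) = morton d (n - i) (\<lambda>k. w k div 2^i)"
    using assms(3) by (simp add: morton_div_pow)
  also have "\<dots> \<longleftrightarrow> (\<forall>k<d. u k div 2^i = w k div 2^i)"
    using morton_eqD[OF bound[OF assms(1)] bound[OF assms(2)]] morton_cong[of d "\<lambda>k. u k div 2^i" "\<lambda>k. w k div 2^i"]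
    by blast
  finally show ?thesis .
qed

section \<open>Dyadic cubes\<close>

lemma floor_divide_pow2_mult:
  fixes x e :: real
  shows "\<lfloor>x / (2^i * e)\<rfloor> = \<lfloor>x / e\<rfloor> div 2^i"
proof -
  have "x / (2^i * e) = (x / e) / real_of_int (2^i)"
    by simp
  then show ?thesis
    by (metis floor_divide_real_eq_div zero_le_numeral zero_le_power)
qed

lemma abs_diff_less_if_floor_divide_eq:
  fixes a b e :: real
  assumes "e > 0" "\<lfloor>a / e\<rfloor> = \<lfloor>b / e\<rfloor>"
  shows "\<bar>a - b\<bar> < e"
proof -
  have "\<bar>a / e - b / e\<bar> < 1"
    using assms(2) floor_correct[of "a / e"] floor_correct[of "b / e"] by linarith
  then have "\<bar>a - b\<bar> / e < 1"
    using assms(1) by (simp add: diff_divide_distrib[symmetric] abs_divide)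
  then show ?thesis
    using assms(1) by (simp add: divide_less_eq)
qed

lemma abs_coord_le_edist: "k < d \<Longrightarrow> \<bar>x k - y k\<bar> \<le> edist d x y"
proof -
  assume "k < d"
  then have "(x k - y k)^2 \<le> (\<Sum>k<d. (x k - y k)^2)"
    by (intro member_le_sum) auto
  then show ?thesis
    unfolding edist_def by (metis real_sqrt_abs real_sqrt_le_mono)
qed

lemma edist_less_of_coords:
  assumes "d \<ge> 1" "\<forall>k<d. \<bar>x k - y k\<bar> < \<epsilon>"
  shows "edist d x y < real d * \<epsilon>"
proof -
  have "\<bar>x 0 - y 0\<bar> < \<epsilon>"
    using assms by simp
  then have "\<epsilon> > 0"
    by linarith
  have "(\<Sum>k<d. (x k - y k)^2) < (\<Sum>k<d. \<epsilon>^2)"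
  proof (rule sum_strict_mono)
    fix k
    assume "k \<in> {..<d}"
    then have "\<bar>x k - y k\<bar>^2 < \<epsilon>^2"
      using assms(2) by (intro power_strict_mono) auto
    then show "(x k - y k)^2 < \<epsilon>^2"
      by simp
  qed (use assms(1) in \<open>auto simp: lessThan_empty_iff\<close>)
  also have "\<dots> = real d * \<epsilon>^2"
    by simp
  also have "\<dots> \<le> real d * real d * \<epsilon>^2"
    using assms(1) by (intro mult_right_mono) auto
  also have "\<dots> = (real d * \<epsilon>)^2"
    by (simp add: power2_eq_square)
  finally have "sqrt (\<Sum>k<d. (x k - y k)^2) < sqrt ((real d * \<epsilon>)^2)"
    by (rule real_sqrt_less_mono)
  then show ?thesis
    unfolding edist_def using \<open>\<epsilon> > 0\<close> by simp
qed

text \<open>The dyadic cubes of level \<open>i\<close> have side \<open>2^i \<delta>/d\<close>; those of level 0 have diameter \<open>< \<delta>\<close>, so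
  each of them contains at most one point of a \<open>\<delta>\<close>-separated set.\<close>

definition cube_index :: "nat \<Rightarrow> real \<Rightarrow> nat \<Rightarrow> (nat \<Rightarrow> real) \<Rightarrow> nat \<Rightarrow> int" where
  "cube_index d \<delta> i p = restrict (\<lambda>k. \<lfloor>p k / (\<delta> / real d)\<rfloor> div 2^i) {..<d}"

definition cube_points :: "nat \<Rightarrow> real \<Rightarrow> (nat \<Rightarrow> real) set \<Rightarrow> nat \<Rightarrow> (nat \<Rightarrow> int) \<Rightarrow> (nat \<Rightarrow> real) set" where
  "cube_points d \<delta> A i v = {q \<in> A. cube_index d \<delta> i q = v}"

lemma cube_index_eq_iff:
  "cube_index d \<delta> i p = cube_index d \<delta> i q \<longleftrightarrow>
    (\<forall>k<d. \<lfloor>p k / (\<delta> / real d)\<rfloor> div 2^i = \<lfloor>q k / (\<delta> / real d)\<rfloor> div 2^i)"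
  unfolding cube_index_def by (auto simp: fun_eq_iff restrict_def)

lemma cube_points_mono: "A \<subseteq> B \<Longrightarrow> cube_points d \<delta> A i v \<subseteq> cube_points d \<delta> B i v"
  unfolding cube_points_def by blast

lemma inj_on_cube_index_0:
  assumes "separated d \<delta> W" "d \<ge> 1" "\<delta> > 0"
  shows "inj_on (cube_index d \<delta> 0) W"
proof (rule inj_onI, rule ccontr)
  fix p q
  assume pq: "p \<in> W" "q \<in> W" "cube_index d \<delta> 0 p = cube_index d \<delta> 0 q" "p \<noteq> q"
  have "\<delta> / real d > 0"
    using assms(2,3) by simp
  have "\<bar>p k - q k\<bar> < \<delta> / real d" if "k < d" for k
    using pq(3) that \<open>\<delta> / real d > 0\<close>
    by (intro abs_diff_less_if_floor_divide_eq) (simp_all add: cube_index_eq_iff)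
  then have "edist d p q < \<delta>"
    using edist_less_of_coords[OF assms(2)] assms(2) by fastforce
  then show False
    using assms(1) pq unfolding separated_def by force
qed

lemma card_cube_points_le:
  assumes "separated d \<delta> W" "d \<ge> 1" "\<delta> > 0"
  shows "card (cube_points d \<delta> W j v) \<le> (2^j)^d"
proof -
  define T where "T = (\<Pi>\<^sub>E k\<in>{..<d}. {2^j * v k ..< 2^j * v k + 2^j})"
  have "card (cube_points d \<delta> W j v) \<le> card T"
  proof (rule card_inj_on_le)
    show "inj_on (cube_index d \<delta> 0) (cube_points d \<delta> W j v)"
      using inj_on_cube_index_0[OF assms] unfolding cube_points_def by (rule inj_on_subset) blast
    show "cube_index d \<delta> 0 ` cube_points d \<delta> W j v \<subseteq> T"
    proof clarify
      fix q
      assume "q \<in> cube_points d \<delta> W j v"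
      then have q: "cube_index d \<delta> j q = v"
        unfolding cube_points_def by simp
      have "\<lfloor>q k / (\<delta> / real d)\<rfloor> \<in> {2^j * v k ..< 2^j * v k + 2^j}" if "k < d" for k
      proof -
        define z where "z = \<lfloor>q k / (\<delta> / real d)\<rfloor>"
        have "v k = z div 2^j"
          using q that unfolding cube_index_def z_def by auto
        then have "2^j * v k = 2^j * (z div 2^j)"
          by simp
        moreover have "z = 2^j * (z div 2^j) + z mod 2^j" "0 \<le> z mod 2^j" "z mod 2^j < 2^j"
          by simp_all
        ultimately show ?thesis
          unfolding z_def[symmetric] atLeastLessThan_iff by linarith
      qed
      then show "cube_index d \<delta> 0 q \<in> T"
        unfolding T_def cube_index_def by simp
    qed
  qed (simp add: T_def finite_PiE)
  also have "card T = (2^j)^d"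
    by (simp add: T_def card_PiE nat_power_eq)
  finally show ?thesis .
qed

lemma cube_points_subset_eball:
  assumes "A \<subseteq> Rd d" "d \<ge> 1" "\<delta> > 0"
  obtains c where "c \<in> Rd d" "cube_points d \<delta> A j v \<subseteq> eball d c (2^j * \<delta>)"
proof -
  define l where "l = 2^j * (\<delta> / real d)"
  have "l > 0"
    using assms(2,3) by (simp add: l_def)
  define c where "c k = (if k < d then real_of_int (v k) * l + l / 2 else 0)" for k
  have "cube_points d \<delta> A j v \<subseteq> eball d c (2^j * \<delta>)"
  proof
    fix q
    assume q: "q \<in> cube_points d \<delta> A j v"
    have "\<bar>c k - q k\<bar> < l" if "k < d" for k
    proof -
      have "\<lfloor>q k / l\<rfloor> = v k"
        using q that unfolding cube_points_def cube_index_def l_def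
        by (auto simp: floor_divide_pow2_mult)
      then have "real_of_int (v k) \<le> q k / l" "q k / l < real_of_int (v k) + 1"
        using floor_correct[of "q k / l"] by simp_all
      then have "real_of_int (v k) * l \<le> q k" "q k < real_of_int (v k) * l + l"
        using \<open>l > 0\<close> by (simp_all add: pos_le_divide_eq pos_divide_less_eq algebra_simps)
      then show ?thesis
        using that \<open>l > 0\<close> unfolding c_def by auto
    qed
    then have "edist d c q < real d * l"
      using edist_less_of_coords[OF assms(2)] by blast
    also have "real d * l = 2^j * \<delta>"
      using assms(2) by (simp add: l_def)
    finally show "q \<in> eball d c (2^j * \<delta>)"
      using q assms(1) unfolding cube_points_def eball_def by auto
  qed
  moreover have "c \<in> Rd d"
    by (simp add: Rd_def c_def)
  ultimately show ?thesis
    using that by blast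
qed

lemma exists_dyadic_scale:
  fixes e x :: real
  assumes "0 < e" "e \<le> x"
  obtains i where "x \<le> 2^i * e" "2^i * e < 2 * x"
proof -
  obtain n where "x / e < 2^n"
    using real_arch_pow[of 2 "x / e"] by auto
  then have ex: "\<exists>i. x \<le> 2^i * e"
    using assms(1) by (auto simp: pos_divide_less_eq intro: less_imp_le)
  define i where "i = (LEAST i. x \<le> 2^i * e)"
  have "x \<le> 2^i * e"
    unfolding i_def by (rule LeastI_ex[OF ex])
  moreover have "2^i * e < 2 * x"
  proof (cases i)
    case 0
    then show ?thesis
      using assms by simp
  next
    case (Suc i')
    then have "\<not> x \<le> 2^i' * e"
      using not_less_Least[of i' "\<lambda>i. x \<le> 2^i * e"] unfolding i_def by simp
    then show ?thesis
      using Suc by simp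
  qed
  ultimately show ?thesis
    by (rule that)
qed

lemma eball_subset_cubes:
  assumes "2 * s \<le> 2^i * (\<delta> / real d)"
  shows "eball d x s \<subseteq> {q. cube_index d \<delta> i q \<in>
    (\<Pi>\<^sub>E k\<in>{..<d}. {\<lfloor>(x k - s) / (2^i * (\<delta> / real d))\<rfloor>, \<lfloor>(x k - s) / (2^i * (\<delta> / real d))\<rfloor> + 1})}"
proof clarify
  fix q
  assume q: "q \<in> eball d x s"
  define l where "l = 2^i * (\<delta> / real d)"
  have "\<lfloor>q k / l\<rfloor> \<in> {\<lfloor>(x k - s) / l\<rfloor>, \<lfloor>(x k - s) / l\<rfloor> + 1}" if "k < d" for k
  proof -
    have "\<bar>x k - q k\<bar> < s"
      using q abs_coord_le_edist[OF that, of x q] unfolding eball_def by simp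
    then have "l > 0" "x k - s < q k" "q k < (x k - s) + l"
      using assms unfolding l_def[symmetric] by linarith+
    then have lo: "(x k - s) / l < q k / l" and "q k / l < (x k - s + l) / l"
      by (simp_all add: divide_strict_right_mono)
    moreover have "(x k - s + l) / l = (x k - s) / l + 1"
      using \<open>l > 0\<close> by (simp add: add_divide_distrib)
    ultimately have hi: "q k / l < (x k - s) / l + 1"
      by simp
    have "\<lfloor>(x k - s) / l\<rfloor> \<le> \<lfloor>q k / l\<rfloor>"
      using lo by (intro floor_mono) simp
    moreover have "\<lfloor>q k / l\<rfloor> < \<lfloor>(x k - s) / l\<rfloor> + 2"
      unfolding floor_less_iff of_int_add of_int_numeral
      using hi floor_correct[of "(x k - s) / l"] by linarith
    ultimately show ?thesis
      by auto
  qed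
  then show "cube_index d \<delta> i q \<in>
    (\<Pi>\<^sub>E k\<in>{..<d}. {\<lfloor>(x k - s) / (2^i * (\<delta> / real d))\<rfloor>, \<lfloor>(x k - s) / (2^i * (\<delta> / real d))\<rfloor> + 1})"
    unfolding cube_index_def l_def by (simp add: floor_divide_pow2_mult)
qed

lemma card_eball_le_of_cube_bound:
  assumes "finite A" "2 * s \<le> 2^i * (\<delta> / real d)"
    and cubes: "\<And>v. real (card (cube_points d \<delta> A i v)) \<le> B * 2^i"
  shows "real (card (eball d x s \<inter> A)) \<le> 2^d * (B * 2^i)"
proof -
  define V where "V = (\<Pi>\<^sub>E k\<in>{..<d}.
    {\<lfloor>(x k - s) / (2^i * (\<delta> / real d))\<rfloor>, \<lfloor>(x k - s) / (2^i * (\<delta> / real d))\<rfloor> + 1})"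
  have "finite V" "card V = 2^d"
    by (simp_all add: V_def finite_PiE card_PiE numeral_2_eq_2)
  have "eball d x s \<inter> A \<subseteq> (\<Union>v\<in>V. cube_points d \<delta> A i v)"
    using eball_subset_cubes[OF assms(2)] unfolding cube_points_def V_def by blast
  then have "card (eball d x s \<inter> A) \<le> card (\<Union>v\<in>V. cube_points d \<delta> A i v)"
    using \<open>finite V\<close> assms(1) by (intro card_mono) (auto simp: cube_points_def)
  also have "\<dots> \<le> (\<Sum>v\<in>V. card (cube_points d \<delta> A i v))"
    by (rule card_UN_le[OF \<open>finite V\<close>])
  finally have "real (card (eball d x s \<inter> A)) \<le> (\<Sum>v\<in>V. real (card (cube_points d \<delta> A i v)))"
    by (metis of_nat_le_iff of_nat_sum)
  also have "\<dots> \<le> 2^d * (B * 2^i)"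
    using sum_mono[of V _ "\<lambda>_. B * 2^i"] cubes \<open>card V = 2^d\<close> by simp
  finally show ?thesis .
qed

lemma frostman_le_of_cube_bound:
  assumes "d \<ge> 1" "\<delta> > 0" "finite A" "B \<ge> 0"
    and cubes: "\<And>i v. real (card (cube_points d \<delta> A i v)) \<le> B * 2^i"
  shows "frostman_le d \<delta> A (2^(d+2) * real d * B)"
  unfolding frostman_le_def
proof (intro ballI allI impI)
  fix x s
  assume "\<delta> \<le> s"
  define e where "e = \<delta> / real d"
  have "e \<le> \<delta>"
    using assms(1,2) by (simp add: e_def divide_le_eq mult_le_cancel_left1)
  then have "0 < e" "e \<le> 2 * s"
    using assms(1,2) \<open>\<delta> \<le> s\<close> by (simp_all add: e_def)
  then obtain i where i: "2 * s \<le> 2^i * e" "2^i * e < 2 * (2 * s)"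
    by (rule exists_dyadic_scale)
  have "real (card (eball d x s \<inter> A)) \<le> 2^d * (B * 2^i)"
    by (rule card_eball_le_of_cube_bound[OF assms(3) i(1)[unfolded e_def] cubes])
  also have "\<dots> \<le> 2^d * (B * (4 * s * real d / \<delta>))"
  proof -
    have "2^i * \<delta> < 4 * s * real d"
      using i(2) assms(1) by (simp add: e_def field_simps)
    then have "2^i \<le> 4 * s * real d / \<delta>"
      using assms(2) by (simp add: pos_le_divide_eq)
    then show ?thesis
      using assms(4) by (intro mult_left_mono) simp_all
  qed
  also have "\<dots> = 2^(d+2) * real d * B * (s / \<delta>)"
    by (simp add: power_add)
  finally show "real (card (eball d x s \<inter> A)) \<le> 2^(d+2) * real d * B * (s / \<delta>)" .
qed

lemma frostman_le_mono:
  assumes "frostman_le d \<delta> A M" "M \<le> M'" "\<delta> > 0"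
  shows "frostman_le d \<delta> A M'"
  unfolding frostman_le_def
proof (intro ballI allI impI)
  fix x r
  assume "x \<in> Rd d" "\<delta> \<le> r"
  then have "M * (r / \<delta>) \<le> M' * (r / \<delta>)"
    using assms(2,3) by (intro mult_right_mono) auto
  then show "real (card (eball d x r \<inter> A)) \<le> M' * (r / \<delta>)"
    using assms(1) \<open>x \<in> Rd d\<close> \<open>\<delta> \<le> r\<close> unfolding frostman_le_def by fastforce
qed

section \<open>Thinning out along an order\<close>

lemma real_nat_div_bounds: "real (n div M) \<le> real n / real M \<and> real n / real M < real (n div M) + 1"
  using floor_correct[of "real n / real M"] by (simp add: floor_divide_of_nat_eq)

lemma card_multiples_in_interval:
  fixes a b M :: nat
  assumes "a \<le> b"
  shows "real (card {r \<in> {a..<b}. M dvd r}) \<le> real (b - a) / M + 2"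
proof -
  have "card {r \<in> {a..<b}. M dvd r} \<le> card {a div M .. b div M}"
  proof (rule card_inj_on_le)
    show "inj_on (\<lambda>r. r div M) {r \<in> {a..<b}. M dvd r}"
      by (auto intro!: inj_onI elim!: dvdE)
    show "(\<lambda>r. r div M) ` {r \<in> {a..<b}. M dvd r} \<subseteq> {a div M .. b div M}"
      by (auto intro!: div_le_mono)
  qed simp
  moreover have "real (card {a div M .. b div M}) = real (b div M) + 1 - real (a div M)"
    using div_le_mono[OF assms, of M] by (simp add: of_nat_diff)
  moreover have "real (b - a) / M = real b / M - real a / M"
    using assms by (simp add: of_nat_diff diff_divide_distrib)
  ultimately show ?thesis
    using real_nat_div_bounds[of b M] real_nat_div_bounds[of a M] by linarith
qed

lemma card_multiples_lessThan:
  fixes n M :: nat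
  assumes "M \<ge> 1"
  shows "n div M \<le> card {r \<in> {..<n}. M dvd r}"
proof -
  have "card {..<n div M} \<le> card {r \<in> {..<n}. M dvd r}"
  proof (rule card_inj_on_le[where f = "\<lambda>q. q * M"])
    show "inj_on (\<lambda>q. q * M) {..<n div M}"
      using assms by (auto simp: inj_on_def)
    show "(\<lambda>q. q * M) ` {..<n div M} \<subseteq> {r \<in> {..<n}. M dvd r}"
    proof
      fix r
      assume "r \<in> (\<lambda>q. q * M) ` {..<n div M}"
      then obtain q where "q < n div M" "r = q * M"
        by auto
      moreover have "Suc q * M \<le> n"
        using calculation(1) assms less_eq_div_iff_mult_less_eq[of M "Suc q" n] by simp
      ultimately show "r \<in> {r \<in> {..<n}. M dvd r}"
        using assms by simp
    qed
  qed simp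
  then show ?thesis
    by simp
qed

definition key_rank :: "('a \<Rightarrow> 'b::linorder) \<Rightarrow> 'a set \<Rightarrow> 'b \<Rightarrow> nat" where
  "key_rank key S a = card {y \<in> S. key y < a}"

lemma key_rank_mono: "finite S \<Longrightarrow> a \<le> b \<Longrightarrow> key_rank key S a \<le> key_rank key S b"
  unfolding key_rank_def by (intro card_mono) auto

lemma key_rank_less: "finite S \<Longrightarrow> q \<in> S \<Longrightarrow> key q < b \<Longrightarrow> key_rank key S (key q) < key_rank key S b"
  unfolding key_rank_def by (intro psubset_card_mono) auto

lemma key_rank_add_interval:
  assumes "finite S" "a \<le> b"
  shows "key_rank key S b = key_rank key S a + card {q \<in> S. a \<le> key q \<and> key q < b}"
proof -
  have "{y \<in> S. key y < b} = {y \<in> S. key y < a} \<union> {q \<in> S. a \<le> key q \<and> key q < b}"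
    using assms(2) by auto
  moreover have "card ({y \<in> S. key y < a} \<union> {q \<in> S. a \<le> key q \<and> key q < b})
      = card {y \<in> S. key y < a} + card {q \<in> S. a \<le> key q \<and> key q < b}"
    using assms(1) by (intro card_Un_disjoint) auto
  ultimately show ?thesis
    unfolding key_rank_def by simp
qed

lemma bij_betw_key_rank:
  assumes "finite S" "inj_on key S"
  shows "bij_betw (\<lambda>q. key_rank key S (key q)) S {..<card S}"
proof -
  let ?rank = "\<lambda>q. key_rank key S (key q)"
  have "inj_on ?rank S"
  proof (rule inj_onI)
    fix p q
    assume "p \<in> S" "q \<in> S" "?rank p = ?rank q"
    then have "key p = key q"
      using key_rank_less[where key = key and b = "key q", OF assms(1) \<open>p \<in> S\<close>]
        key_rank_less[where key = key and b = "key p", OF assms(1) \<open>q \<in> S\<close>]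
      by (cases "key p" "key q" rule: linorder_cases) auto
    then show "p = q"
      using inj_onD[OF assms(2)] \<open>p \<in> S\<close> \<open>q \<in> S\<close> by blast
  qed
  moreover have "?rank ` S = {..<card S}"
  proof (rule card_subset_eq)
    show "?rank ` S \<subseteq> {..<card S}"
      unfolding key_rank_def using assms(1) by (auto intro!: psubset_card_mono)
    show "card (?rank ` S) = card {..<card S}"
      using card_image[OF \<open>inj_on ?rank S\<close>] by simp
  qed simp
  ultimately show ?thesis
    by (simp add: bij_betw_def)
qed

text \<open>Applied to Z-order keys, \<open>thin_out\<close> thins a dyadic cube at all scales at once, since its
  dyadic subcubes are key intervals.\<close>

definition thin_out :: "('a \<Rightarrow> 'b::linorder) \<Rightarrow> nat \<Rightarrow> 'a set \<Rightarrow> 'a set" where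
  "thin_out key M S = {q \<in> S. M dvd key_rank key S (key q)}"

lemma thin_out_subset: "thin_out key M S \<subseteq> S"
  by (auto simp: thin_out_def)

lemma card_thin_out:
  assumes "finite S" "inj_on key S" "M \<ge> 1"
  shows "card S div M \<le> card (thin_out key M S)"
proof -
  have "card (thin_out key M S) = card {r \<in> {..<card S}. M dvd r}"
    using bij_betw_key_rank[OF assms(1,2)] unfolding thin_out_def
    by (subst bij_betw_same_card[of "\<lambda>q. key_rank key S (key q)"]) (auto simp: bij_betw_def inj_on_def)
  then show ?thesis
    using card_multiples_lessThan[OF assms(3)] by simp
qed

lemma card_thin_out_interval:
  fixes key :: "'a \<Rightarrow> 'b::linorder"
  assumes "finite S" "inj_on key S"
  shows "real (card {q \<in> thin_out key M S. a \<le> key q \<and> key q < b})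
    \<le> real (card {q \<in> S. a \<le> key q \<and> key q < b}) / M + 2"
proof (cases "a \<le> b")
  case True
  let ?rank = "\<lambda>q. key_rank key S (key q)"
  let ?A = "{q \<in> thin_out key M S. a \<le> key q \<and> key q < b}"
  have "?rank ` ?A \<subseteq> {r \<in> {key_rank key S a..<key_rank key S b}. M dvd r}"
  proof
    fix r
    assume "r \<in> ?rank ` ?A"
    then obtain q where q: "r = ?rank q" "q \<in> S" "M dvd ?rank q" "a \<le> key q" "key q < b"
      by (auto simp: thin_out_def)
    then show "r \<in> {r \<in> {key_rank key S a..<key_rank key S b}. M dvd r}"
      using key_rank_mono[where key = key, OF assms(1) q(4)]
        key_rank_less[where key = key, OF assms(1) q(2,5)] by simp
  qed
  moreover have "inj_on ?rank ?A"
    using bij_betw_key_rank[OF assms] by (rule bij_betw_imp_inj_on[THEN inj_on_subset])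
      (auto simp: thin_out_def)
  ultimately have "card ?A \<le> card {r \<in> {key_rank key S a..<key_rank key S b}. M dvd r}"
    by (simp add: card_image[symmetric] card_mono)
  moreover have "key_rank key S b - key_rank key S a = card {q \<in> S. a \<le> key q \<and> key q < b}"
    using key_rank_add_interval[OF assms(1) True] by simp
  ultimately show ?thesis
    using card_multiples_in_interval[OF key_rank_mono[where key = key, OF assms(1) True], of M] by simp
next
  case False
  then have "{q \<in> thin_out key M S. a \<le> key q \<and> key q < b} = {}"
    by auto
  then have "real (card {q \<in> thin_out key M S. a \<le> key q \<and> key q < b}) = 0"
    by (simp only: card.empty of_nat_0)
  then show ?thesis
    by simp
qed

section \<open>Z-order inside a dyadic cube\<close>

lemma zmod_mult_div_eq: "0 < m \<Longrightarrow> 0 \<le> c \<Longrightarrow> x mod (m * c) div m = x div m mod c"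
  for x m c :: int
  by (simp add: zmod_zmult2_eq)

lemma div_eq_iff_mod_div_eq:
  fixes x y m c :: int
  assumes "0 < m" "0 < c" "x div (m * c) = y div (m * c)"
  shows "x div m = y div m \<longleftrightarrow> x mod (m * c) div m = y mod (m * c) div m"
proof -
  have "x div m div c = y div m div c"
    using assms by (simp add: zdiv_zmult2_eq)
  then show ?thesis
    using assms(1,2) by (simp add: zmod_mult_div_eq) (metis div_mult_mod_eq)
qed

lemma div_eq_iff_bounds: "n div D = c \<longleftrightarrow> D * c \<le> n \<and> n < D * c + D" if "0 < D" for n D c :: nat
proof -
  have "n div D = c \<longleftrightarrow> c \<le> n div D \<and> n div D < Suc c"
    by linarith
  also have "\<dots> \<longleftrightarrow> c * D \<le> n \<and> n < Suc c * D"
    using less_eq_div_iff_mult_less_eq[OF that] div_less_iff_less_mult[OF that] by simp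
  finally show ?thesis
    by (simp add: algebra_simps)
qed

definition cube_key :: "nat \<Rightarrow> real \<Rightarrow> nat \<Rightarrow> (nat \<Rightarrow> real) \<Rightarrow> nat" where
  "cube_key d \<delta> j p = morton d j (\<lambda>k. nat (\<lfloor>p k / (\<delta> / real d)\<rfloor> mod 2^j))"

lemma cube_index_eq_iff_cube_key:
  assumes "cube_index d \<delta> j p = cube_index d \<delta> j q" "i \<le> j"
  shows "cube_index d \<delta> i p = cube_index d \<delta> i q \<longleftrightarrow>
    cube_key d \<delta> j p div (2^d)^i = cube_key d \<delta> j q div (2^d)^i"
proof -
  define z :: "(nat \<Rightarrow> real) \<Rightarrow> nat \<Rightarrow> int" where "z p k = \<lfloor>p k / (\<delta> / real d)\<rfloor>" for p k
  have pow: "(2::int)^i * 2^(j - i) = 2^j"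
    using assms(2) by (simp flip: power_add)
  have nat_div_eq_iff: "nat x div 2^i = nat y div 2^i \<longleftrightarrow> x div 2^i = y div 2^i"
    if "0 \<le> x" "0 \<le> y" for x y :: int
  proof -
    have "nat x div 2^i = nat (x div 2^i)" "nat y div 2^i = nat (y div 2^i)"
      using that by (simp_all add: nat_div_distrib nat_power_eq)
    then show ?thesis
      using that by (simp add: eq_nat_nat_iff pos_imp_zdiv_nonneg_iff)
  qed
  have "z p k div 2^j = z q k div 2^j" if "k < d" for k
    using assms(1) that by (simp add: cube_index_eq_iff z_def)
  then have mod_div: "z p k div 2^i = z q k div 2^i \<longleftrightarrow> z p k mod 2^j div 2^i = z q k mod 2^j div 2^i"
    if "k < d" for k
    using div_eq_iff_mod_div_eq[of "2^i" "2^(j - i)" "z p k" "z q k"] that unfolding pow by simp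
  have "cube_index d \<delta> i p = cube_index d \<delta> i q \<longleftrightarrow> (\<forall>k<d. z p k div 2^i = z q k div 2^i)"
    by (simp add: cube_index_eq_iff z_def)
  also have "\<dots> \<longleftrightarrow> (\<forall>k<d. z p k mod 2^j div 2^i = z q k mod 2^j div 2^i)"
    using mod_div by blast
  also have "\<dots> \<longleftrightarrow> (\<forall>k<d. nat (z p k mod 2^j) div 2^i = nat (z q k mod 2^j) div 2^i)"
    by (simp add: nat_div_eq_iff)
  also have "\<dots> \<longleftrightarrow> cube_key d \<delta> j p div (2^d)^i = cube_key d \<delta> j q div (2^d)^i"
    unfolding cube_key_def z_def[symmetric]
    by (rule morton_div_eq_iff[symmetric]) (simp_all add: assms(2) nat_less_iff)
  finally show ?thesis .
qed

lemma inj_on_cube_key: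
  assumes "separated d \<delta> W" "d \<ge> 1" "\<delta> > 0"
  shows "inj_on (cube_key d \<delta> j) (cube_points d \<delta> W j v)"
proof (rule inj_onI)
  fix p q
  assume "p \<in> cube_points d \<delta> W j v" "q \<in> cube_points d \<delta> W j v" "cube_key d \<delta> j p = cube_key d \<delta> j q"
  then have "p \<in> W" "q \<in> W" "cube_index d \<delta> 0 p = cube_index d \<delta> 0 q"
    using cube_index_eq_iff_cube_key[of d \<delta> j p q 0] by (auto simp: cube_points_def)
  then show "p = q"
    using inj_on_cube_index_0[OF assms] by (auto dest: inj_onD)
qed

lemma card_cube_points_thin_out:
  fixes M :: nat and v :: "nat \<Rightarrow> int"
  assumes "finite W" "separated d \<delta> W" "d \<ge> 1" "\<delta> > 0" "i \<le> j"
  defines "S' \<equiv> thin_out (cube_key d \<delta> j) M (cube_points d \<delta> W j v)"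
  shows "real (card (cube_points d \<delta> S' i w)) \<le> real (card (cube_points d \<delta> W i w)) / M + 2"
proof (cases "cube_points d \<delta> S' i w = {}")
  case False
  let ?S = "cube_points d \<delta> W j v"
  let ?key = "cube_key d \<delta> j"
  define D :: nat where "D = (2^d)^i"
  obtain p where p: "p \<in> S'" "cube_index d \<delta> i p = w"
    using False unfolding cube_points_def by auto
  define c where "c = ?key p div D"
  have subcube: "cube_index d \<delta> i q = w \<longleftrightarrow> D * c \<le> ?key q \<and> ?key q < D * c + D" if "q \<in> ?S" for q
  proof -
    have "p \<in> ?S"
      using thin_out_subset p(1) unfolding S'_def by (rule subsetD)
    then have "cube_index d \<delta> j q = cube_index d \<delta> j p"
      using that by (simp add: cube_points_def)
    then have "cube_index d \<delta> i q = w \<longleftrightarrow> ?key q div D = c"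
      using cube_index_eq_iff_cube_key[OF _ assms(5)] p(2) unfolding c_def D_def by auto
    also have "\<dots> \<longleftrightarrow> D * c \<le> ?key q \<and> ?key q < D * c + D"
      by (rule div_eq_iff_bounds) (simp add: D_def)
    finally show ?thesis .
  qed
  have "finite ?S"
    using assms(1) by (simp add: cube_points_def)
  have "cube_points d \<delta> S' i w = {q \<in> S'. D * c \<le> ?key q \<and> ?key q < D * c + D}"
    using subcube thin_out_subset[of "cube_key d \<delta> j" M ?S] unfolding S'_def cube_points_def by blast
  then have "real (card (cube_points d \<delta> S' i w))
      \<le> real (card {q \<in> ?S. D * c \<le> ?key q \<and> ?key q < D * c + D}) / M + 2"
    using card_thin_out_interval[OF \<open>finite ?S\<close> inj_on_cube_key[OF assms(2-4)]] by (simp add: S'_def)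
  also have "\<dots> \<le> real (card (cube_points d \<delta> W i w)) / M + 2"
  proof -
    have "{q \<in> ?S. D * c \<le> ?key q \<and> ?key q < D * c + D} \<subseteq> cube_points d \<delta> W i w"
      using subcube by (auto simp: cube_points_def)
    then have "card {q \<in> ?S. D * c \<le> ?key q \<and> ?key q < D * c + D} \<le> card (cube_points d \<delta> W i w)"
      using assms(1) by (intro card_mono) (simp_all add: cube_points_def)
    then show ?thesis
      by (simp add: divide_right_mono)
  qed
  finally show ?thesis .
qed simp

lemma nat_ceiling_bounds:
  fixes B :: real
  assumes "1 \<le> B"
  shows "1 \<le> nat \<lceil>B\<rceil>" "B \<le> real (nat \<lceil>B\<rceil>)" "real (nat \<lceil>B\<rceil>) \<le> 2 * B"
proof -
  have "real (nat \<lceil>B\<rceil>) = of_int \<lceil>B\<rceil>"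
    using assms by simp
  then show "1 \<le> nat \<lceil>B\<rceil>" "B \<le> real (nat \<lceil>B\<rceil>)" "real (nat \<lceil>B\<rceil>) \<le> 2 * B"
    using assms ceiling_correct[of B] by linarith+
qed

lemma pow2_le_div_if_greater:
  fixes n M :: nat
  assumes "B \<le> real M" "real M \<le> 2 * B" "B * 2^j < real n" "1 \<le> j" "1 \<le> M"
  shows "2^(j - 1) \<le> n div M"
proof -
  have "(2::real)^j = 2 * 2^(j - 1)"
    using assms(4) by (simp flip: power_Suc)
  then have "2^(j - 1) \<le> B * 2^j / M"
    using assms(1,2,5) by (simp add: field_simps)
  also have "\<dots> < real n / M"
    using assms(3,5) by (simp add: divide_strict_right_mono)
  also have "\<dots> < real (n div M) + 1"
    using real_nat_div_bounds by blast
  finally have "real (2^(j - 1)) < real (n div M + 1)"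
    by simp
  then show ?thesis
    unfolding of_nat_less_iff by linarith
qed

lemma sparse_subset_of_heavy_cube:
  assumes "d \<ge> 1" "\<delta> > 0" "B \<ge> 1" "finite W" "separated d \<delta> W" "2 \<le> j"
    and light: "\<And>i w. i < j \<Longrightarrow> real (card (cube_points d \<delta> W i w)) \<le> B * 2^i"
    and heavy: "B * 2^j < real (card (cube_points d \<delta> W j v))"
  obtains Z' where "Z' \<subseteq> cube_points d \<delta> W j v" "card Z' = 2^(j - 2)"
    "\<And>i w. real (card (cube_points d \<delta> Z' i w)) \<le> 3 * 2^i"
proof -
  let ?S = "cube_points d \<delta> W j v"
  define M where "M = nat \<lceil>B\<rceil>"
  define S' where "S' = thin_out (cube_key d \<delta> j) M ?S"
  note M = nat_ceiling_bounds[OF assms(3), folded M_def]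
  have "finite ?S"
    using assms(4) by (simp add: cube_points_def)
  have "(2::nat)^(j - 2) \<le> 2^(j - 1)"
    by (intro power_increasing) auto
  also have "2^(j - 1) \<le> card ?S div M"
    using M assms(6) heavy by (intro pow2_le_div_if_greater) auto
  also have "\<dots> \<le> card S'"
    unfolding S'_def by (rule card_thin_out[OF \<open>finite ?S\<close> inj_on_cube_key[OF assms(5,1,2)] M(1)])
  finally obtain Z' where Z': "Z' \<subseteq> S'" "card Z' = 2^(j - 2)"
    by (meson obtain_subset_with_card_n)
  have "finite S'"
    using \<open>finite ?S\<close> thin_out_subset unfolding S'_def by (rule rev_finite_subset)
  have "real (card (cube_points d \<delta> Z' i w)) \<le> 3 * 2^i" for i w
  proof (cases "i < j")
    case True
    have "card (cube_points d \<delta> Z' i w) \<le> card (cube_points d \<delta> S' i w)"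
      using Z'(1) \<open>finite S'\<close> by (intro card_mono cube_points_mono) (auto simp: cube_points_def)
    then have "real (card (cube_points d \<delta> Z' i w)) \<le> real (card (cube_points d \<delta> W i w)) / M + 2"
      using card_cube_points_thin_out[OF assms(4,5,1,2) less_imp_le[OF True], of M v w]
      unfolding S'_def by linarith
    also have "\<dots> \<le> B * 2^i / M + 2"
      using light[OF True, of w] by (simp add: divide_right_mono)
    also have "\<dots> \<le> 2^i + 2"
      using M by (simp add: field_simps)
    finally show ?thesis
      using one_le_power[of "2::real" i] by linarith
  next
    case False
    have "card (cube_points d \<delta> Z' i w) \<le> card Z'"
      using Z' \<open>finite S'\<close> by (intro card_mono) (auto simp: cube_points_def finite_subset)
    also have "card Z' \<le> (2::nat)^i"
      using Z'(2) False by simp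
    finally have "real (card (cube_points d \<delta> Z' i w)) \<le> 2^i"
      by (metis of_nat_le_iff of_nat_numeral of_nat_power)
    then show ?thesis
      using zero_le_power[of "2::real" i] by linarith
  qed
  moreover have "Z' \<subseteq> ?S"
    using Z'(1) thin_out_subset unfolding S'_def by (rule order_trans)
  ultimately show ?thesis
    using that Z'(2) by blast
qed

section \<open>Clusters\<close>

text \<open>Condition (ii) for a single part \<open>Z\<close>, with Frostman constant \<open>C\<close> for \<open>Z'\<close>: no logarithmic loss
  is needed.\<close>

definition cluster :: "nat \<Rightarrow> real \<Rightarrow> real \<Rightarrow> real \<Rightarrow> (nat \<Rightarrow> real) set \<Rightarrow> bool" where
  "cluster d \<delta> K C Z \<longleftrightarrow> (\<exists>c\<in>Rd d. \<exists>r. Z \<subseteq> eball d c r \<and> r \<ge> \<delta> * K powr (1 / real d) / C \<and>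
     (\<exists>Z'. Z' \<subseteq> Z \<and> r / (C * \<delta>) \<le> real (card Z') \<and> real (card Z') \<le> C * (r / \<delta>) \<and>
        frostman_le d \<delta> Z' C))"

definition cluster_const :: "nat \<Rightarrow> real" where
  "cluster_const d = 2^(d+2) * real d * 4^d"

lemma cluster_const_bounds:
  assumes "d \<ge> 1"
  shows "4 \<le> cluster_const d" "3 * (2^(d+2) * real d) \<le> cluster_const d"
    "2^(d+2) * real d \<le> cluster_const d ^ d"
proof -
  define A :: real where "A = 2^(d+2) * real d"
  have "(4::real) = 2^2"
    by simp
  also have "\<dots> \<le> 2^(d+2)"
    by (intro power_increasing) auto
  also have "\<dots> \<le> A"
    using assms by (simp add: A_def)
  finally have "4 \<le> A" .
  have "(4::real)^1 \<le> 4^d"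
    using assms by (intro power_increasing) auto
  then have "A * 3 \<le> A * 4^d"
    using \<open>4 \<le> A\<close> by (intro mult_left_mono) auto
  then show "3 * A \<le> cluster_const d"
    by (simp add: cluster_const_def A_def)
  then show "4 \<le> cluster_const d"
    using \<open>4 \<le> A\<close> by linarith
  have "cluster_const d ^ 1 \<le> cluster_const d ^ d"
    using \<open>4 \<le> cluster_const d\<close> assms by (intro power_increasing) auto
  then show "A \<le> cluster_const d ^ d"
    using \<open>3 * A \<le> cluster_const d\<close> \<open>4 \<le> A\<close> by simp
qed

lemma powr_inverse_less:
  fixes x y :: real
  assumes "0 < x" "0 \<le> y" "0 < n" "x < y^n"
  shows "x powr (1 / real n) < y"
proof (rule power_less_imp_less_base)
  show "(x powr (1 / real n))^n < y^n"
    using assms by (simp add: powr_realpow[symmetric] powr_powr)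
qed (rule assms(2))

lemma heavy_cube_level:
  assumes "separated d \<delta> W" "d \<ge> 1" "\<delta> > 0" "4^d \<le> B"
    and heavy: "B * 2^j < real (card (cube_points d \<delta> W j v))"
  shows "B < (2^j)^d" "2 \<le> j"
proof -
  have "0 \<le> B"
    using assms(4) zero_le_power[of "4::real" d] by linarith
  then have "B * 1 \<le> B * 2^j"
    by (intro mult_left_mono) simp_all
  then have "B \<le> B * 2^j"
    by simp
  also have "\<dots> < real (card (cube_points d \<delta> W j v))"
    by (rule heavy)
  also have "\<dots> \<le> (2^j)^d"
    using of_nat_mono[OF card_cube_points_le[OF assms(1-3), of j v], where 'a = real] by simp
  finally show "B < (2^j)^d" .
  then have "(4::real)^d < (2^j)^d"
    using assms(4) by linarith
  then have "(4::real) < 2^j"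
    by (rule power_less_imp_less_base) simp
  show "2 \<le> j"
  proof (rule ccontr)
    assume "\<not> 2 \<le> j"
    then have "(2::real)^j \<le> 2^2"
      by (intro power_increasing) auto
    then show False
      using \<open>4 < 2^j\<close> by simp
  qed
qed

lemma heavy_cube_cluster:
  assumes "d \<ge> 1" "\<delta> > 0" "4^d \<le> B" "finite W" "W \<subseteq> Rd d" "separated d \<delta> W"
    and light: "\<And>i w. i < j \<Longrightarrow> real (card (cube_points d \<delta> W i w)) \<le> B * 2^i"
    and heavy: "B * 2^j < real (card (cube_points d \<delta> W j v))"
  shows "cluster d \<delta> (2^(d+2) * real d * B) (cluster_const d) (cube_points d \<delta> W j v)"
proof -
  let ?S = "cube_points d \<delta> W j v"
  define A :: real where "A = 2^(d+2) * real d"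
  define C where "C = cluster_const d"
  note C = cluster_const_bounds[OF assms(1), folded A_def C_def]
  have "1 \<le> B"
    using assms(3) one_le_power[of "4::real" d] by linarith
  note level = heavy_cube_level[OF assms(6,1,2,3) heavy]
  obtain Z' where Z': "Z' \<subseteq> ?S" "card Z' = 2^(j - 2)"
    and Z'_cubes: "\<And>i w. real (card (cube_points d \<delta> Z' i w)) \<le> 3 * 2^i"
    using sparse_subset_of_heavy_cube[OF assms(1,2) \<open>1 \<le> B\<close> assms(4,6) level(2) light heavy] by blast
  obtain c where c: "c \<in> Rd d" "?S \<subseteq> eball d c (2^j * \<delta>)"
    using cube_points_subset_eball[OF assms(5,1,2)] by blast
  have "A * B < C^d * (2^j)^d"
    using C(3) level(1) \<open>1 \<le> B\<close> assms(1) by (intro mult_le_less_imp_less) (auto simp: A_def)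
  then have "(A * B) powr (1 / real d) < 2^j * C"
    using C(1) \<open>1 \<le> B\<close> assms(1) by (intro powr_inverse_less) (auto simp: A_def power_mult_distrib mult.commute)
  then have radius: "\<delta> * (A * B) powr (1 / real d) / C \<le> 2^j * \<delta>"
    using assms(2) C(1) by (simp add: field_simps)
  have "(2::real)^j = 2^(2 + (j - 2))"
    using level(2) by (simp only: le_add_diff_inverse)
  then have "2^j * \<delta> / (C * \<delta>) \<le> real (card Z')" "real (card Z') \<le> C * (2^j * \<delta> / \<delta>)"
    using assms(2) C(1) Z'(2) by (simp_all add: power_add field_simps)
  moreover have "frostman_le d \<delta> Z' C"
  proof (rule frostman_le_mono)
    show "frostman_le d \<delta> Z' (2^(d+2) * real d * 3)"
      using Z' \<open>finite W\<close> by (intro frostman_le_of_cube_bound[OF assms(1,2)] Z'_cubes)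
        (auto simp: cube_points_def finite_subset)
    show "2^(d+2) * real d * 3 \<le> C"
      using C(2) by (simp add: A_def)
  qed (rule assms(2))
  ultimately show ?thesis
    unfolding cluster_def C_def[symmetric] A_def[symmetric]
    using c radius Z'(1) by (intro bexI[of _ c] exI[of _ "2^j * \<delta>"] conjI exI[of _ Z']) auto
qed

lemma singleton_cluster:
  assumes "x \<in> Rd d" "\<delta> > 0" "1 \<le> K" "K \<le> C"
  shows "cluster d \<delta> K C {x}"
proof -
  have "K powr (1 / real d) \<le> K powr 1"
    using assms(3) by (intro powr_mono) (auto simp: divide_le_eq)
  also have "\<dots> \<le> C * 1"
    using assms(3,4) by simp
  also have "\<dots> \<le> C * C"
    using assms(3,4) by (intro mult_left_mono) auto
  finally have "\<delta> * K powr (1 / real d) / C \<le> C * \<delta>"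
    using assms(2-4) by (simp add: field_simps)
  moreover have "{x} \<subseteq> eball d x (C * \<delta>)"
    using assms by (simp add: eball_def edist_def)
  moreover have "frostman_le d \<delta> {x} C"
    unfolding frostman_le_def
  proof (intro ballI allI impI)
    fix y r
    assume "\<delta> \<le> r"
    have "real (card (eball d y r \<inter> {x})) \<le> 1"
      by (simp add: card_le_Suc0_iff_eq)
    also have "1 \<le> C * (r / \<delta>)"
      using assms(2-4) \<open>\<delta> \<le> r\<close> mult_mono[of 1 C 1 "r / \<delta>"] by simp
    finally show "real (card (eball d y r \<inter> {x})) \<le> C * (r / \<delta>)" .
  qed
  moreover have "C * \<delta> / (C * \<delta>) \<le> real (card {x})" "real (card {x}) \<le> C * (C * \<delta> / \<delta>)"
    using assms(2-4) mult_mono[of 1 C 1 C] by simp_all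
  ultimately show ?thesis
    unfolding cluster_def using assms(1) by blast
qed

lemma frostman_le_empty: "K \<ge> 0 \<Longrightarrow> \<delta> > 0 \<Longrightarrow> frostman_le d \<delta> {} K"
  by (simp add: frostman_le_def)

lemma frostman_or_heavy_cube_cluster:
  assumes "d \<ge> 1" "\<delta> > 0" "4^d \<le> B" "finite W" "W \<subseteq> Rd d" "separated d \<delta> W"
  shows "frostman_le d \<delta> W (2^(d+2) * real d * B) \<or>
    (\<exists>S\<subseteq>W. S \<noteq> {} \<and> cluster d \<delta> (2^(d+2) * real d * B) (cluster_const d) S)"
proof -
  have "0 \<le> B"
    using assms(3) zero_le_power[of "4::real" d] by linarith
  show ?thesis
  proof (cases "\<exists>j v. B * 2^j < real (card (cube_points d \<delta> W j v))")
    case False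
    then show ?thesis
      using \<open>0 \<le> B\<close> by (intro disjI1 frostman_le_of_cube_bound[OF assms(1,2,4)]) (auto simp: not_less)
  next
    case True
    define j where "j = (LEAST j. \<exists>v. B * 2^j < real (card (cube_points d \<delta> W j v)))"
    obtain v where heavy: "B * 2^j < real (card (cube_points d \<delta> W j v))"
      using LeastI_ex[OF True] unfolding j_def by blast
    have light: "real (card (cube_points d \<delta> W i w)) \<le> B * 2^i" if "i < j" for i w
      using not_less_Least[OF that[unfolded j_def]] by (auto simp: not_less)
    have "cube_points d \<delta> W j v \<noteq> {}"
      using heavy \<open>0 \<le> B\<close> by (auto simp: mult_less_0_iff)
    moreover have "cube_points d \<delta> W j v \<subseteq> W"
      by (simp add: cube_points_def)
    ultimately show ?thesis
      using heavy_cube_cluster[OF assms light heavy] by blast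
  qed
qed

lemma frostman_or_cluster:
  assumes "d \<ge> 1" "\<delta> > 0" "K \<ge> 1" "finite W" "W \<subseteq> Rd d" "separated d \<delta> W"
  shows "frostman_le d \<delta> W K \<or> (\<exists>S\<subseteq>W. S \<noteq> {} \<and> cluster d \<delta> K (cluster_const d) S)"
proof (cases "K < cluster_const d")
  case True
  show ?thesis
  proof (cases "W = {}")
    case True
    then show ?thesis
      using assms(2,3) frostman_le_empty by simp
  next
    case False
    then obtain x where "x \<in> W"
      by blast
    then have "{x} \<subseteq> W" "cluster d \<delta> K (cluster_const d) {x}"
      using singleton_cluster assms(2,3,5) \<open>K < cluster_const d\<close> by auto
    then show ?thesis
      by blast
  qed
next
  case False
  define B where "B = K / (2^(d+2) * real d)"
  have "K = 2^(d+2) * real d * B"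
    using assms(1) by (simp add: B_def)
  moreover have "4^d \<le> B"
    using False assms(1) by (simp add: B_def cluster_const_def field_simps)
  ultimately show ?thesis
    using frostman_or_heavy_cube_cluster[OF assms(1,2) _ assms(4-6)] by metis
qed

lemma separated_subset: "separated d \<delta> W \<Longrightarrow> V \<subseteq> W \<Longrightarrow> separated d \<delta> V"
  unfolding separated_def by blast

lemma peel_off_parts:
  fixes X :: "'a set"
  assumes "finite X" "\<And>W. W \<subseteq> X \<Longrightarrow> Q W \<or> (\<exists>S\<subseteq>W. S \<noteq> {} \<and> P S)"
  shows "\<exists>Y (Z :: nat \<Rightarrow> 'a set) N. X = Y \<union> (\<Union>i<N. Z i) \<and> (\<forall>i<N. Y \<inter> Z i = {}) \<and>
    (\<forall>i<N. \<forall>j<N. i \<noteq> j \<longrightarrow> Z i \<inter> Z j = {}) \<and> Q Y \<and> (\<forall>i<N. P (Z i))"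
  using assms
proof (induction X rule: finite_psubset_induct)
  case (psubset X)
  consider "Q X" | S where "S \<subseteq> X" "S \<noteq> {}" "P S"
    using psubset.prems by blast
  then show ?case
  proof cases
    case 1
    then show ?thesis
      by (intro exI[of _ X] exI[of _ "\<lambda>_. {}"] exI[of _ 0]) simp
  next
    case 2
    then have "X - S \<subset> X"
      by blast
    moreover have "Q W \<or> (\<exists>S\<subseteq>W. S \<noteq> {} \<and> P S)" if "W \<subseteq> X - S" for W
      using that psubset.prems by blast
    ultimately have "\<exists>Y (Z :: nat \<Rightarrow> 'a set) N. X - S = Y \<union> (\<Union>i<N. Z i) \<and> (\<forall>i<N. Y \<inter> Z i = {}) \<and>
        (\<forall>i<N. \<forall>j<N. i \<noteq> j \<longrightarrow> Z i \<inter> Z j = {}) \<and> Q Y \<and> (\<forall>i<N. P (Z i))"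
      by (rule psubset.IH)
    then obtain Y and Z :: "nat \<Rightarrow> 'a set" and N :: nat where Y: "X - S = Y \<union> (\<Union>i<N. Z i)"
        "\<forall>i<N. Y \<inter> Z i = {}" "\<forall>i<N. \<forall>j<N. i \<noteq> j \<longrightarrow> Z i \<inter> Z j = {}" "Q Y" "\<forall>i<N. P (Z i)"
      by blast
    have "X = Y \<union> (\<Union>i<Suc N. (Z(N := S)) i)"
      using Y(1) 2(1) by (auto simp: lessThan_Suc)
    moreover have "\<forall>i<Suc N. Y \<inter> (Z(N := S)) i = {}"
      using Y(1,2) by (auto simp: less_Suc_eq)
    moreover have "\<forall>i<Suc N. \<forall>j<Suc N. i \<noteq> j \<longrightarrow> (Z(N := S)) i \<inter> (Z(N := S)) j = {}"
      using Y(1,3) by (auto simp: less_Suc_eq)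
    moreover have "\<forall>i<Suc N. P ((Z(N := S)) i)"
      using Y(5) 2(3) by (auto simp: less_Suc_eq)
    ultimately show ?thesis
      using Y(4) by (intro exI[of _ Y] exI[of _ "Z(N := S)"] exI[of _ "Suc N"] conjI)
  qed
qed

lemma cluster_decomposition:
  assumes "d \<ge> 1" "\<delta> > 0" "K \<ge> 1" "finite X" "X \<subseteq> Rd d" "separated d \<delta> X"
  shows "\<exists>Y (Z :: nat \<Rightarrow> (nat \<Rightarrow> real) set) N. X = Y \<union> (\<Union>i<N. Z i) \<and> (\<forall>i<N. Y \<inter> Z i = {}) \<and>
    (\<forall>i<N. \<forall>j<N. i \<noteq> j \<longrightarrow> Z i \<inter> Z j = {}) \<and> frostman_le d \<delta> Y K \<and>
    (\<forall>i<N. cluster d \<delta> K (cluster_const d) (Z i))"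
  using assms(4)
proof (rule peel_off_parts)
  fix W
  assume "W \<subseteq> X"
  then show "frostman_le d \<delta> W K \<or> (\<exists>S\<subseteq>W. S \<noteq> {} \<and> cluster d \<delta> K (cluster_const d) S)"
    using assms by (intro frostman_or_cluster) (auto intro: finite_subset separated_subset)
qed

theorem lemma3p2:
  shows "\<exists>C'::real. \<forall>d::nat. d \<ge> 1 \<longrightarrow> (\<exists>C::real. C > 0 \<and>
    (\<forall>\<delta>::real. \<forall>X K::real. 0 < \<delta> \<and> \<delta> < 1 \<and> finite X \<and> X \<subseteq> Rd d \<and>
       separated d \<delta> X \<and> K \<ge> 1 \<longrightarrow>
     (\<exists>Y (Z::nat \<Rightarrow> (nat \<Rightarrow> real) set) (N::nat).
        X = Y \<union> (\<Union>i<N. Z i) \<and>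
        (\<forall>i<N. Y \<inter> Z i = {}) \<and>
        (\<forall>i<N. \<forall>j<N. i \<noteq> j \<longrightarrow> Z i \<inter> Z j = {}) \<and>
        frostman_le d \<delta> Y K \<and>
        (\<forall>i<N. \<exists>c\<in>Rd d. \<exists>r_i. Z i \<subseteq> eball d c r_i \<and>
             r_i \<ge> \<delta> * K powr (1 / real d) / C \<and>
             (\<exists>Z'. Z' \<subseteq> Z i \<and>
                r_i / (C * \<delta>) \<le> real (card Z') \<and> real (card Z') \<le> C * (r_i / \<delta>) \<and>
                frostman_le d \<delta> Z' (C * (1 + \<bar>ln \<delta>\<bar>) powr C'))))))"
  apply (rule exI[of _ 0])
  apply (simp only: powr_zero_eq_one abs_add_one_gt_zero[THEN dual_order.strict_implies_not_eq]
      if_False mult_1_right flip: cluster_def)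
  apply (intro allI impI)
  subgoal for d
    using cluster_decomposition[of d]
    by (intro exI[of _ "cluster_const d"]) (simp add: cluster_const_def)
  done

end
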